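(* Let $\{X_n,n\geq1\}$ be a $\varphi$-mixing sequence of random variables with common marginal distribution function $F$, whose mixing coefficients satisfy $\sum_{n=1}^\infty\varphi^{1/2}(n)<\infty$. Fix $p\in(0,1)$, let $\xi_p=\inf\{x:F(x)\geq p\}$ and $\xi_{p,n}=\inf\{x:F_n(x)\geq p\}$. Assume that $F$ possesses a positive continuous density $f$ in a neighborhood $\mathscr{N}_p$ of $\xi_p$ such that $0<\sup\{f(x):x\in\mathscr{N}_p\}<\infty$, and that $f'$ exists and is bounded in some neighborhood of $\xi_p$. Then with probability 1, $$\xi_{p,n}=\xi_p-\frac{F_n(\xi_p)-p}{f(\xi_p)}+O\left(\frac{(\log n)^{1/2}}{n^{1/2}}\right),\quad n\to\infty.$$
   Context: All random variables are defined on a probability space $(\Omega,\mathcal{F},P)$. $F_n(x)=\frac1n\sum_{i=1}^n I(X_i\leq x)$ is the empirical distribution function of $X_1,\dots,X_n$. For $n\leq m$ let $\mathcal{F}_n^m=\sigma(X_i,n\leq i\leq m)$. For sub-$\sigma$-algebras $\mathcal{B},\mathcal{R}$ let $\varphi(\mathcal{B},\mathcal{R})=\sup_{A\in\mathcal{B},B\in\mathcal{R},P(A)>0}|P(B\mid A)-P(B)|$, and the mixing coefficients are $\varphi(n)=\sup_{k\geq1}\varphi(\mathcal{F}_1^k,\mathcal{F}_{k+n}^\infty)$. The sequence is called $\varphi$-mixing if $\varphi(n)\downarrow0$ as $n\to\infty$. *)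

theory Defs
  imports "HOL-Probability.Probability" "HOL-Library.Landau_Symbols"
begin

definition gen_sigma :: "'a measure \<Rightarrow> (nat \<Rightarrow> 'a \<Rightarrow> real) \<Rightarrow> nat set \<Rightarrow> 'a set set" where
  "gen_sigma M X I = sigma_sets (space M) (\<Union>i\<in>I. {X i -` B \<inter> space M | B. B \<in> sets borel})"

definition phi_coef :: "'a measure \<Rightarrow> 'a set set \<Rightarrow> 'a set set \<Rightarrow> real" where
  "phi_coef M \<A> \<B> = (SUP AB \<in> {(A, B). A \<in> \<A> \<and> B \<in> \<B> \<and> measure M A > 0}.
      \<bar>measure M (fst AB \<inter> snd AB) / measure M (fst AB) - measure M (snd AB)\<bar>)"

definition mixing_phi :: "'a measure \<Rightarrow> (nat \<Rightarrow> 'a \<Rightarrow> real) \<Rightarrow> nat \<Rightarrow> real" where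
  "mixing_phi M X n = (SUP k \<in> {1..}. phi_coef M (gen_sigma M X {1..k}) (gen_sigma M X {k+n..}))"

definition emp_df :: "(nat \<Rightarrow> 'a \<Rightarrow> real) \<Rightarrow> nat \<Rightarrow> 'a \<Rightarrow> real \<Rightarrow> real" where
  "emp_df X n \<omega> x = (\<Sum>i=1..n. if X i \<omega> \<le> x then 1 else 0) / real n"

end

theory Submission
  imports Defs
begin

(* Everything reduces to the deviation of F_n from F at three points. Fix y and let
   E_i = {X_i <= y}. Cut {1..n} into blocks of length L ~ sqrt (n / log n) and group the blocks of
   even and of odd index (Bernstein's blocking). Monotone functions of the numbers of hits in two
   index sets at distance g decorrelate up to phi(g), so the moment generating function of the
   centred count over the even (odd) blocks is at most a product of one factor
   1 + l^2 L (1 + 2 sum phi) + e phi(L) per block; each block factor comes from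
   exp x <= 1 + x + x^2 and Cov(1_{E_i}, 1_{E_j}) <= phi(|i - j|). With l = sqrt (log n / n) this gives
   P(|F_n(y) - F(y)| >= C sqrt (log n / n)) <= 4 / n^2 uniformly in y, hence, by Borel-Cantelli,
   |F_n(y_n) - F(y_n)| = O(sqrt (log n / n)) almost surely along every deterministic sequence y_n.

   Since F(xi_p) = p and F'(xi_p) = f(xi_p) > 0, for small h > 0 the value F(xi_p + h) exceeds
   p + f(xi_p) h / 2 and F(xi_p - h) is below p - f(xi_p) h / 2. Taking h_n a large multiple of
   sqrt (log n / n) and applying the above at xi_p and xi_p +- h_n traps xi_{p,n} in
   [xi_p - h_n, xi_p + h_n], and (F_n(xi_p) - p) / f(xi_p) is of the same order. *)

section \<open>Mixing coefficients\<close>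

lemma gen_sigma_mono: "I \<subseteq> J \<Longrightarrow> gen_sigma M X I \<subseteq> gen_sigma M X J"
  unfolding gen_sigma_def by (rule sigma_sets_mono') blast

lemma space_in_gen_sigma: "space M \<in> gen_sigma M X I"
  unfolding gen_sigma_def by (rule sigma_sets_top)

lemma vimage_in_gen_sigma: "i \<in> I \<Longrightarrow> B \<in> sets borel \<Longrightarrow> X i -` B \<inter> space M \<in> gen_sigma M X I"
  unfolding gen_sigma_def by (rule sigma_sets.Basic) blast

lemma sets_sigma_gen_sigma: "sets (sigma (space M) (gen_sigma M X I)) = gen_sigma M X I"
proof -
  have gen: "(\<Union>i\<in>I. {X i -` B \<inter> space M | B. B \<in> sets borel}) \<subseteq> Pow (space M)" by auto
  then have "gen_sigma M X I \<subseteq> Pow (space M)"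
    unfolding gen_sigma_def using sigma_sets_into_sp by blast
  then show ?thesis
    by (simp add: sets_measure_of gen_sigma_def sigma_sets_sigma_sets_eq[OF gen])
qed

lemma (in prob_space) abs_cond_prob_diff_le_1:
  assumes "A \<in> events" "B \<in> events" "0 < prob A"
  shows "\<bar>prob (A \<inter> B) / prob A - prob B\<bar> \<le> 1"
proof -
  have "prob (A \<inter> B) \<le> prob A" using assms by (intro finite_measure_mono) auto
  then have "0 \<le> prob (A \<inter> B) / prob A" "prob (A \<inter> B) / prob A \<le> 1" using assms(3) by auto
  moreover have "0 \<le> prob B" "prob B \<le> 1" by auto
  ultimately show ?thesis by linarith
qed

lemma (in prob_space) abs_cond_prob_diff_le_phi_coef:
  assumes "\<A> \<subseteq> events" "\<B> \<subseteq> events" "A \<in> \<A>" "B \<in> \<B>" "0 < prob A"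
  shows "\<bar>prob (A \<inter> B) / prob A - prob B\<bar> \<le> phi_coef M \<A> \<B>"
  unfolding phi_coef_def using assms
  by (intro cSUP_upper2[where x="(A, B)"] bdd_aboveI[where M=1])
     (auto intro!: abs_cond_prob_diff_le_1)

lemma (in prob_space) phi_coef_le_1:
  assumes "\<A> \<subseteq> events" "\<B> \<subseteq> events" "space M \<in> \<A>" "space M \<in> \<B>"
  shows "phi_coef M \<A> \<B> \<le> 1"
  unfolding phi_coef_def using assms
  by (intro cSUP_least) (auto intro!: abs_cond_prob_diff_le_1 exI[of _ "space M"] simp: prob_space)

locale phi_mixing = prob_space M for M :: "'a measure" +
  fixes X :: "nat \<Rightarrow> 'a \<Rightarrow> real"
  assumes random_variable_X: "\<And>i. 1 \<le> i \<Longrightarrow> X i \<in> borel_measurable M"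
    and decseq_phi: "decseq (mixing_phi M X)"
    and summable_phi: "summable (\<lambda>n. mixing_phi M X (Suc n))"
begin

abbreviation "\<phi> \<equiv> mixing_phi M X"

lemma mixing_phi_nonneg: "0 \<le> \<phi> n"
proof -
  have "\<phi> \<longlonglongrightarrow> 0"
    using summable_LIMSEQ_zero[OF summable_phi] by (simp add: filterlim_sequentially_Suc)
  then show ?thesis using decseq_ge[OF decseq_phi] by blast
qed

lemma gen_sigma_subset_events: "I \<subseteq> {1..} \<Longrightarrow> gen_sigma M X I \<subseteq> events"
  unfolding gen_sigma_def using random_variable_X
  by (intro sets.sigma_sets_subset) (auto simp: measurable_sets)

lemma phi_coef_le_mixing_phi:
  assumes "1 \<le> k"
  shows "phi_coef M (gen_sigma M X {1..k}) (gen_sigma M X {k+g..}) \<le> \<phi> g"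
  unfolding mixing_phi_def using assms
  by (intro cSUP_upper2[where x=k] bdd_aboveI2[where M=1] phi_coef_le_1 gen_sigma_subset_events
      space_in_gen_sigma) auto

lemma prob_Int_le_mixing:
  assumes k: "1 \<le> k" and A: "A \<in> gen_sigma M X {1..k}" and B: "B \<in> gen_sigma M X {k+g..}"
  shows "prob (A \<inter> B) \<le> prob A * (prob B + \<phi> g)"
proof (cases "prob A = 0")
  case True
  have "prob (A \<inter> B) \<le> prob A"
    using A B k gen_sigma_subset_events[of "{1..k}"] gen_sigma_subset_events[of "{k+g..}"]
    by (intro finite_measure_mono) auto
  with True show ?thesis by simp
next
  case False
  then have pos: "0 < prob A" using measure_nonneg[of M A] by linarith
  have "\<bar>prob (A \<inter> B) / prob A - prob B\<bar> \<le> \<phi> g"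
    using A B k gen_sigma_subset_events[of "{1..k}"] gen_sigma_subset_events[of "{k+g..}"]
    by (intro order.trans[OF abs_cond_prob_diff_le_phi_coef phi_coef_le_mixing_phi] pos) auto
  then have "prob (A \<inter> B) / prob A \<le> prob B + \<phi> g" by linarith
  then show ?thesis using pos by (simp add: divide_le_eq mult.commute)
qed

definition phi_sum :: real where
  "phi_sum = (\<Sum>k. \<phi> (Suc k))"

lemma sum_mixing_phi_le_phi_sum:
  assumes "finite J" "inj_on g J" "\<And>j. j \<in> J \<Longrightarrow> 1 \<le> g j"
  shows "(\<Sum>j\<in>J. \<phi> (g j)) \<le> phi_sum"
proof -
  have inj: "inj_on (\<lambda>j. g j - 1) J"
  proof (rule inj_onI)
    fix x y assume xy: "x \<in> J" "y \<in> J" "g x - 1 = g y - 1"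
    then have "g x = g y" using assms(3)[OF xy(1)] assms(3)[OF xy(2)] by arith
    then show "x = y" using assms(2) xy(1,2) by (auto dest: inj_onD)
  qed
  have "(\<Sum>j\<in>J. \<phi> (g j)) = (\<Sum>k\<in>(\<lambda>j. g j - 1) ` J. \<phi> (Suc k))"
    using assms(3) by (subst sum.reindex[OF inj]) (auto intro!: sum.cong simp: Suc_le_eq)
  also have "\<dots> \<le> phi_sum"
    unfolding phi_sum_def using assms(1)
    by (intro sum_le_suminf[OF summable_phi]) (auto simp: mixing_phi_nonneg)
  finally show ?thesis .
qed

lemma phi_sum_nonneg: "0 \<le> phi_sum"
  using sum_mixing_phi_le_phi_sum[of "{}"] by simp

lemma mixing_phi_le_phi_sum: "1 \<le> k \<Longrightarrow> \<phi> k \<le> phi_sum"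
  using sum_mixing_phi_le_phi_sum[of "{k}" id] by simp

lemma mult_mixing_phi_le_phi_sum: "real k * \<phi> k \<le> phi_sum"
proof -
  have "real k * \<phi> k = (\<Sum>i<k. \<phi> k)" by simp
  also have "\<dots> \<le> (\<Sum>i<k. \<phi> (Suc i))"
    using decseq_phi by (intro sum_mono) (auto simp: decseq_def)
  also have "\<dots> \<le> phi_sum" by (rule sum_mixing_phi_le_phi_sum) auto
  finally show ?thesis .
qed

lemma sum_mixing_phi_dist_le:
  assumes "finite J"
  shows "(\<Sum>j\<in>J. if i = j then 1 else \<phi> (max i j - min i j)) \<le> 1 + 2 * phi_sum"
proof -
  have "(\<Sum>j\<in>J. if i = j then 1 else \<phi> (max i j - min i j))
      = (\<Sum>j\<in>J. if j = i then 1 else 0) + ((\<Sum>j\<in>J. if i < j then \<phi> (j - i) else 0)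
          + (\<Sum>j\<in>J. if j < i then \<phi> (i - j) else 0))"
    unfolding sum.distrib[symmetric] by (intro sum.cong) (auto simp: max_def min_def)
  also have "(\<Sum>j\<in>J. if j = i then 1 else 0) \<le> (1::real)"
    using assms by (simp add: sum.delta)
  also have "(\<Sum>j\<in>J. if i < j then \<phi> (j - i) else 0) = (\<Sum>j\<in>{j\<in>J. i < j}. \<phi> (j - i))"
    by (simp add: sum.inter_filter[OF assms])
  also have "(\<Sum>j\<in>J. if j < i then \<phi> (i - j) else 0) = (\<Sum>j\<in>{j\<in>J. j < i}. \<phi> (i - j))"
    by (simp add: sum.inter_filter[OF assms])
  also have "(\<Sum>j\<in>{j\<in>J. i < j}. \<phi> (j - i)) \<le> phi_sum"
    using assms by (intro sum_mixing_phi_le_phi_sum) (auto simp: inj_on_def)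
  also have "(\<Sum>j\<in>{j\<in>J. j < i}. \<phi> (i - j)) \<le> phi_sum"
    using assms by (intro sum_mixing_phi_le_phi_sum) (auto simp: inj_on_def)
  finally show ?thesis by simp
qed

end

section \<open>Counting events along a mixing sequence\<close>

definition increment :: "(nat \<Rightarrow> real) \<Rightarrow> nat \<Rightarrow> real" where
  "increment h r = (if r = 0 then h 0 else h r - h (r - 1))"

lemma sum_increment: "(\<Sum>r\<le>c. increment h r) = h c"
  by (induction c) (auto simp: increment_def)

lemma increment_nonneg: "mono h \<Longrightarrow> 0 \<le> h 0 \<Longrightarrow> 0 \<le> increment h r"
  using monoD[of h "r - 1" r] by (auto simp: increment_def)

lemma layer_cake_nat:
  assumes "c \<le> n"
  shows "h c = (\<Sum>r\<le>n. increment h r * of_bool (r \<le> c))"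
proof -
  have "(\<Sum>r\<le>n. increment h r * of_bool (r \<le> c)) = (\<Sum>r\<in>{..n} \<inter> {r. r \<le> c}. increment h r)"
    by (simp add: sum.inter_restrict of_bool_def if_distrib cong: if_cong)
  also have "{..n} \<inter> {r. r \<le> c} = {..c}" using assms by auto
  finally show ?thesis by (simp add: sum_increment)
qed

lemma (in prob_space) integral_sum_indicator:
  assumes "finite I" "\<And>i. i \<in> I \<Longrightarrow> A i \<in> events"
  shows "(\<integral>\<omega>. (\<Sum>i\<in>I. c i * indicator (A i) \<omega>) \<partial>M) = (\<Sum>i\<in>I. c i * prob (A i))"
  using assms by (subst Bochner_Integration.integral_sum) (auto simp: emeasure_finite less_top[symmetric] Int_absorb2)

lemma centred_indicator_mult:
  "(indicator A x - q) * (indicator B x - q)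
    = indicator (A \<inter> B) x - q * indicator A x - q * indicator B x + (q\<^sup>2 :: real)"
  by (simp add: indicator_def power2_eq_square algebra_simps)

lemma exp_le_one_plus_x_plus_sq:
  fixes x :: real
  assumes "x \<le> 1"
  shows "exp x \<le> 1 + x + x\<^sup>2"
proof (cases "0 \<le> x")
  case True
  then show ?thesis using exp_bound assms by blast
next
  case False
  have "exp x * (1 - x) \<le> exp x * exp (- x)"
    using exp_ge_add_one_self[of "- x"] by (intro mult_left_mono) auto
  also have "\<dots> = 1" by (simp add: exp_minus)
  also have "1 \<le> (1 + x + x\<^sup>2) * (1 - x)"
  proof -
    have "0 \<le> - (x ^ 3)"
      using False mult_nonneg_nonpos[of "x * x" x] by (simp add: power3_eq_cube)
    then show ?thesis by (simp add: power2_eq_square power3_eq_cube algebra_simps)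
  qed
  finally show ?thesis using False by (simp add: mult_le_cancel_right)
qed

locale phi_mixing_events = phi_mixing +
  fixes E :: "nat \<Rightarrow> 'a set" and q :: real
  assumes E_in_gen_sigma: "\<And>i. 1 \<le> i \<Longrightarrow> E i \<in> gen_sigma M X {i}"
    and prob_E: "\<And>i. 1 \<le> i \<Longrightarrow> prob (E i) = q"
begin

lemma E_in_events: "1 \<le> i \<Longrightarrow> E i \<in> events"
  using E_in_gen_sigma gen_sigma_subset_events[of "{i}"] by auto

lemma q_bounds: "0 \<le> q" "q \<le> 1"
  using prob_E[of 1] by auto

definition hits :: "nat set \<Rightarrow> 'a \<Rightarrow> nat" where
  "hits J \<omega> = card {i\<in>J. \<omega> \<in> E i}"

lemma hits_eq_sum_indicator: "finite J \<Longrightarrow> real (hits J \<omega>) = (\<Sum>i\<in>J. indicator (E i) \<omega>)"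
  unfolding hits_def indicator_def by (simp add: sum.If_cases Int_def)

lemma hits_le_card: "finite J \<Longrightarrow> hits J \<omega> \<le> card J"
  unfolding hits_def by (rule card_mono) auto

lemma hits_Un: "finite J \<Longrightarrow> finite K \<Longrightarrow> J \<inter> K = {} \<Longrightarrow> hits (J \<union> K) \<omega> = hits J \<omega> + hits K \<omega>"
  unfolding hits_def by (subst card_Un_disjoint[symmetric]) (auto intro!: arg_cong[where f=card])

lemma hits_ge_in_gen_sigma:
  assumes "finite J" "J \<subseteq> I" "J \<subseteq> {1..}"
  shows "{\<omega>\<in>space M. r \<le> hits J \<omega>} \<in> gen_sigma M X I"
proof -
  let ?N = "sigma (space M) (gen_sigma M X I)"
  have "E i \<in> sets ?N" if "i \<in> J" for i
    using that assms E_in_gen_sigma[of i] gen_sigma_mono[of "{i}" I M X]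
    by (auto simp: sets_sigma_gen_sigma)
  then have "(\<lambda>\<omega>. real (hits J \<omega>)) \<in> borel_measurable ?N"
    using assms(1) by (simp add: hits_eq_sum_indicator)
  from measurable_sets[OF this, of "{real r..}"]
  have "{\<omega>\<in>space ?N. real r \<le> real (hits J \<omega>)} \<in> sets ?N"
    by (simp add: vimage_def Int_def conj_commute)
  then show ?thesis by (simp add: sets_sigma_gen_sigma space_measure_of_conv)
qed

lemma hits_ge_in_events: "finite J \<Longrightarrow> J \<subseteq> {1..} \<Longrightarrow> {\<omega>\<in>space M. r \<le> hits J \<omega>} \<in> events"
  using hits_ge_in_gen_sigma[of J J] gen_sigma_subset_events[of J] by auto

lemma integral_fun_hits:
  assumes "finite J" "J \<subseteq> {1..}"
  shows "(\<integral>\<omega>. h (hits J \<omega>) \<partial>M)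
    = (\<Sum>r\<le>card J. increment h r * prob {\<omega>\<in>space M. r \<le> hits J \<omega>})"
proof -
  have "(\<integral>\<omega>. h (hits J \<omega>) \<partial>M)
      = (\<integral>\<omega>. (\<Sum>r\<le>card J. increment h r * indicator {\<omega>\<in>space M. r \<le> hits J \<omega>} \<omega>) \<partial>M)"
    using assms(1)
    by (intro Bochner_Integration.integral_cong refl, subst layer_cake_nat[OF hits_le_card])
       (auto intro!: sum.cong simp: indicator_def)
  also have "\<dots> = (\<Sum>r\<le>card J. increment h r * prob {\<omega>\<in>space M. r \<le> hits J \<omega>})"
    using assms by (intro integral_sum_indicator hits_ge_in_events) auto
  finally show ?thesis .
qed

lemma integral_mult_fun_hits:
  assumes fin: "finite J1" "finite J2" and J: "J1 \<subseteq> {1..}" "J2 \<subseteq> {1..}"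
  shows "(\<integral>\<omega>. h1 (hits J1 \<omega>) * h2 (hits J2 \<omega>) \<partial>M)
    = (\<Sum>r\<le>card J1. \<Sum>s\<le>card J2. increment h1 r * increment h2 s
        * prob ({\<omega>\<in>space M. r \<le> hits J1 \<omega>} \<inter> {\<omega>\<in>space M. s \<le> hits J2 \<omega>}))"
proof -
  let ?A = "\<lambda>r. {\<omega>\<in>space M. r \<le> hits J1 \<omega>}" and ?B = "\<lambda>s. {\<omega>\<in>space M. s \<le> hits J2 \<omega>}"
  let ?c = "\<lambda>r s. increment h1 r * increment h2 s"
  have events: "?A r \<inter> ?B s \<in> events" for r s
    using hits_ge_in_events fin J by blast
  have "(\<integral>\<omega>. h1 (hits J1 \<omega>) * h2 (hits J2 \<omega>) \<partial>M)
      = (\<integral>\<omega>. (\<Sum>r\<le>card J1. \<Sum>s\<le>card J2. ?c r s * indicator (?A r \<inter> ?B s) \<omega>) \<partial>M)"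
  proof (rule Bochner_Integration.integral_cong[OF refl])
    fix \<omega> assume \<omega>: "\<omega> \<in> space M"
    have "h1 (hits J1 \<omega>) * h2 (hits J2 \<omega>)
        = (\<Sum>r\<le>card J1. increment h1 r * of_bool (r \<le> hits J1 \<omega>))
          * (\<Sum>s\<le>card J2. increment h2 s * of_bool (s \<le> hits J2 \<omega>))"
      using layer_cake_nat[OF hits_le_card[OF fin(1)], where h=h1]
        layer_cake_nat[OF hits_le_card[OF fin(2)], where h=h2] by simp
    also have "\<dots> = (\<Sum>r\<le>card J1. \<Sum>s\<le>card J2. ?c r s * indicator (?A r \<inter> ?B s) \<omega>)"
      unfolding sum_product using \<omega> by (intro sum.cong refl) (simp add: indicator_def)
    finally show "h1 (hits J1 \<omega>) * h2 (hits J2 \<omega>)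
        = (\<Sum>r\<le>card J1. \<Sum>s\<le>card J2. ?c r s * indicator (?A r \<inter> ?B s) \<omega>)" .
  qed
  also have "\<dots> = (\<Sum>r\<le>card J1. \<Sum>s\<le>card J2. ?c r s * prob (?A r \<inter> ?B s))"
    using events
    by (subst Bochner_Integration.integral_sum)
       (auto intro!: sum.cong integral_sum_indicator Bochner_Integration.integrable_sum integrable_mult_right
        simp: emeasure_finite less_top[symmetric] simp del: sum_mult_indicator)
  finally show ?thesis .
qed

lemma integral_mult_hits_le_mixing:
  assumes fin: "finite J1" "finite J2" and a: "1 \<le> a" and J1: "J1 \<subseteq> {1..a}" and J2: "J2 \<subseteq> {a+g..}"
    and h1: "mono h1" "0 \<le> h1 0" and h2: "mono h2" "0 \<le> h2 0"
  shows "(\<integral>\<omega>. h1 (hits J1 \<omega>) * h2 (hits J2 \<omega>) \<partial>M)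
    \<le> (\<integral>\<omega>. h1 (hits J1 \<omega>) \<partial>M) * ((\<integral>\<omega>. h2 (hits J2 \<omega>) \<partial>M) + \<phi> g * h2 (card J2))"
proof -
  let ?A = "\<lambda>r. {\<omega>\<in>space M. r \<le> hits J1 \<omega>}" and ?B = "\<lambda>s. {\<omega>\<in>space M. s \<le> hits J2 \<omega>}"
  let ?c = "\<lambda>r s. increment h1 r * increment h2 s"
  have J1': "J1 \<subseteq> {1..}" and J2': "J2 \<subseteq> {1..}" using J1 J2 a by auto
  have "(\<integral>\<omega>. h1 (hits J1 \<omega>) * h2 (hits J2 \<omega>) \<partial>M)
      = (\<Sum>r\<le>card J1. \<Sum>s\<le>card J2. ?c r s * prob (?A r \<inter> ?B s))"
    by (rule integral_mult_fun_hits[OF fin J1' J2'])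
  also have "\<dots> \<le> (\<Sum>r\<le>card J1. \<Sum>s\<le>card J2. ?c r s * (prob (?A r) * (prob (?B s) + \<phi> g)))"
  proof (intro sum_mono mult_left_mono)
    fix r s
    show "prob (?A r \<inter> ?B s) \<le> prob (?A r) * (prob (?B s) + \<phi> g)"
      using fin J1 J2 a by (intro prob_Int_le_mixing hits_ge_in_gen_sigma) auto
    show "0 \<le> ?c r s" using increment_nonneg h1 h2 by simp
  qed
  also have "\<dots> = (\<Sum>r\<le>card J1. increment h1 r * prob (?A r))
      * (\<Sum>s\<le>card J2. increment h2 s * (prob (?B s) + \<phi> g))"
    unfolding sum_product by (intro sum.cong refl) (simp add: mult_ac)
  also have "\<dots> = (\<Sum>r\<le>card J1. increment h1 r * prob (?A r))
      * ((\<Sum>s\<le>card J2. increment h2 s * prob (?B s)) + \<phi> g * (\<Sum>s\<le>card J2. increment h2 s))"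
    by (simp add: distrib_left sum.distrib sum_distrib_right[symmetric] mult_ac)
  also have "\<dots> = (\<integral>\<omega>. h1 (hits J1 \<omega>) \<partial>M) * ((\<integral>\<omega>. h2 (hits J2 \<omega>) \<partial>M) + \<phi> g * h2 (card J2))"
    by (simp only: integral_fun_hits[OF fin(1) J1'] integral_fun_hits[OF fin(2) J2'] sum_increment)
  finally show ?thesis .
qed

definition centred_hits :: "nat set \<Rightarrow> 'a \<Rightarrow> real" where
  "centred_hits J \<omega> = real (hits J \<omega>) - q * real (card J)"

lemma centred_hits_eq_sum: "finite J \<Longrightarrow> centred_hits J \<omega> = (\<Sum>i\<in>J. indicator (E i) \<omega> - q)"
  unfolding centred_hits_def by (simp add: hits_eq_sum_indicator sum_subtractf)

lemma abs_centred_hits_le_card: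
  assumes "finite J"
  shows "\<bar>centred_hits J \<omega>\<bar> \<le> real (card J)"
proof -
  have "real (hits J \<omega>) \<le> real (card J)" using hits_le_card[OF assms] by simp
  moreover have "0 \<le> q * real (card J)" "q * real (card J) \<le> real (card J)"
    using q_bounds by (auto intro: mult_left_le_one_le)
  ultimately show ?thesis unfolding centred_hits_def by linarith
qed

lemma centred_hits_empty: "centred_hits {} \<omega> = 0"
  unfolding centred_hits_def hits_def by simp

lemma centred_hits_Un:
  "finite J \<Longrightarrow> finite K \<Longrightarrow> J \<inter> K = {} \<Longrightarrow> centred_hits (J \<union> K) \<omega> = centred_hits J \<omega> + centred_hits K \<omega>"
  unfolding centred_hits_def by (simp add: hits_Un card_Un_disjoint algebra_simps)

lemma borel_measurable_centred_hits:
  assumes "finite J" "J \<subseteq> {1..}"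
  shows "centred_hits J \<in> borel_measurable M"
proof -
  have "centred_hits J = (\<lambda>\<omega>. \<Sum>i\<in>J. indicator (E i) \<omega> - q)"
    by (intro ext centred_hits_eq_sum assms)
  then show ?thesis
    using assms E_in_events
    by (auto intro!: borel_measurable_sum borel_measurable_diff borel_measurable_indicator)
qed

lemma integrable_fun_centred_hits:
  fixes h :: "real \<Rightarrow> real"
  assumes "finite J" "J \<subseteq> {1..}" "continuous_on UNIV h"
  shows "integrable M (\<lambda>\<omega>. h (centred_hits J \<omega>))"
proof -
  let ?I = "{- real (card J)..real (card J)}"
  obtain B where B: "\<And>x. x \<in> ?I \<Longrightarrow> norm (h x) \<le> B"
    using compact_imp_bounded[OF compact_continuous_image[OF continuous_on_subset[OF assms(3)] compact_Icc]]
    unfolding bounded_iff by blast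
  have range: "centred_hits J \<omega> \<in> ?I" for \<omega>
    using abs_centred_hits_le_card[OF assms(1), of \<omega>] by (simp add: abs_le_iff)
  show ?thesis
  proof (intro integrable_const_bound[where B=B])
    show "AE \<omega> in M. norm (h (centred_hits J \<omega>)) \<le> B"
      using B range by (intro AE_I2) blast
    show "(\<lambda>\<omega>. h (centred_hits J \<omega>)) \<in> borel_measurable M"
      by (rule borel_measurable_continuous_on[OF assms(3) borel_measurable_centred_hits[OF assms(1,2)]])
  qed
qed

lemma integral_centred_hits:
  assumes "finite J" "J \<subseteq> {1..}"
  shows "(\<integral>\<omega>. centred_hits J \<omega> \<partial>M) = 0"
  using assms E_in_events prob_E
  by (simp add: centred_hits_eq_sum Bochner_Integration.integral_sum Bochner_Integration.integral_diff
      emeasure_finite less_top[symmetric] Int_absorb2 subset_eq prob_space)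

lemma prob_Int_E_le:
  assumes "1 \<le> i" "i < j"
  shows "prob (E i \<inter> E j) \<le> q\<^sup>2 + \<phi> (j - i)"
proof -
  have "E i \<in> gen_sigma M X {1..i}" "E j \<in> gen_sigma M X {i + (j - i)..}"
    using assms E_in_gen_sigma[of i] E_in_gen_sigma[of j]
      gen_sigma_mono[of "{i}" "{1..i}" M X] gen_sigma_mono[of "{j}" "{i + (j - i)..}" M X] by auto
  with assms(1) have "prob (E i \<inter> E j) \<le> prob (E i) * (prob (E j) + \<phi> (j - i))"
    by (rule prob_Int_le_mixing)
  also have "\<dots> = q\<^sup>2 + q * \<phi> (j - i)"
    using assms prob_E by (simp add: power2_eq_square algebra_simps)
  also have "q * \<phi> (j - i) \<le> \<phi> (j - i)"
    using q_bounds mixing_phi_nonneg by (simp add: mult_left_le_one_le)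
  finally show ?thesis by simp
qed

lemma covariance_E_le:
  assumes "1 \<le> i" "1 \<le> j"
  shows "(\<integral>\<omega>. (indicator (E i) \<omega> - q) * (indicator (E j) \<omega> - q) \<partial>M)
    \<le> (if i = j then 1 else \<phi> (max i j - min i j))"
proof -
  have "(\<integral>\<omega>. (indicator (E i) \<omega> - q) * (indicator (E j) \<omega> - q) \<partial>M) = prob (E i \<inter> E j) - q\<^sup>2"
    using assms E_in_events prob_E
    by (simp add: centred_indicator_mult emeasure_finite less_top[symmetric] Int_absorb2 prob_space
        power2_eq_square)
  also have "\<dots> \<le> (if i = j then 1 else \<phi> (max i j - min i j))"
  proof (cases "i = j")
    case True
    have "prob (E i \<inter> E j) \<le> 1" "0 \<le> q\<^sup>2" by simp_all
    then have "prob (E i \<inter> E j) - q\<^sup>2 \<le> 1" by linarith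
    then show ?thesis using True by simp
  next
    case False
    then show ?thesis using prob_Int_E_le[of i j] prob_Int_E_le[of j i] assms
      by (auto simp: Int_commute max_def min_def not_le)
  qed
  finally show ?thesis .
qed

lemma integral_centred_hits_sq_le:
  assumes "finite J" "J \<subseteq> {1..}"
  shows "(\<integral>\<omega>. (centred_hits J \<omega>)\<^sup>2 \<partial>M) \<le> real (card J) * (1 + 2 * phi_sum)"
proof -
  have "(\<integral>\<omega>. (centred_hits J \<omega>)\<^sup>2 \<partial>M)
      = (\<Sum>i\<in>J. \<Sum>j\<in>J. \<integral>\<omega>. (indicator (E i) \<omega> - q) * (indicator (E j) \<omega> - q) \<partial>M)"
    using assms E_in_events
    by (simp add: centred_hits_eq_sum power2_eq_square sum_product centred_indicator_mult
        emeasure_finite less_top[symmetric] subset_eq del: sum_mult_indicator)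
  also have "\<dots> \<le> (\<Sum>i\<in>J. \<Sum>j\<in>J. if i = j then 1 else \<phi> (max i j - min i j))"
    using assms by (intro sum_mono covariance_E_le) auto
  also have "\<dots> \<le> (\<Sum>i\<in>J. 1 + 2 * phi_sum)"
    by (intro sum_mono sum_mixing_phi_dist_le assms)
  finally show ?thesis by simp
qed

lemma integral_exp_centred_hits_le:
  assumes J: "finite J" "J \<subseteq> {1..}" and l: "0 \<le> l" "l * real (card J) \<le> 1"
  shows "(\<integral>\<omega>. exp (l * centred_hits J \<omega>) \<partial>M) \<le> 1 + l\<^sup>2 * (real (card J) * (1 + 2 * phi_sum))"
proof -
  have int: "integrable M (\<lambda>\<omega>. h (centred_hits J \<omega>))" if "continuous_on UNIV h" for h :: "real \<Rightarrow> real"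
    using J that by (rule integrable_fun_centred_hits)
  have "(\<integral>\<omega>. exp (l * centred_hits J \<omega>) \<partial>M)
      \<le> (\<integral>\<omega>. 1 + l * centred_hits J \<omega> + l\<^sup>2 * (centred_hits J \<omega>)\<^sup>2 \<partial>M)"
  proof (rule integral_mono)
    fix \<omega>
    have "l * centred_hits J \<omega> \<le> l * real (card J)"
      using abs_centred_hits_le_card[OF J(1), of \<omega>] l(1) by (intro mult_left_mono) auto
    then have "exp (l * centred_hits J \<omega>) \<le> 1 + l * centred_hits J \<omega> + (l * centred_hits J \<omega>)\<^sup>2"
      using l(2) by (intro exp_le_one_plus_x_plus_sq) linarith
    then show "exp (l * centred_hits J \<omega>) \<le> 1 + l * centred_hits J \<omega> + l\<^sup>2 * (centred_hits J \<omega>)\<^sup>2"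
      by (simp add: power_mult_distrib)
  qed (intro int continuous_intros)+
  also have "\<dots> = 1 + l * (\<integral>\<omega>. centred_hits J \<omega> \<partial>M) + l\<^sup>2 * (\<integral>\<omega>. (centred_hits J \<omega>)\<^sup>2 \<partial>M)"
    using int[of "\<lambda>x. x"] int[of "\<lambda>x. x\<^sup>2"] by (simp add: prob_space continuous_intros)
  also have "\<dots> \<le> 1 + l\<^sup>2 * (real (card J) * (1 + 2 * phi_sum))"
    using integral_centred_hits[OF J] integral_centred_hits_sq_le[OF J] by (simp add: mult_left_mono)
  finally show ?thesis .
qed

lemma integral_exp_centred_hits_Un_le:
  assumes fin: "finite U" "finite J" and a: "1 \<le> a" "U \<subseteq> {1..a}" and g: "1 \<le> g" "J \<subseteq> {a+g..}"
    and l: "0 \<le> l"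
  shows "(\<integral>\<omega>. exp (l * centred_hits (U \<union> J) \<omega>) \<partial>M)
    \<le> (\<integral>\<omega>. exp (l * centred_hits U \<omega>) \<partial>M)
      * ((\<integral>\<omega>. exp (l * centred_hits J \<omega>) \<partial>M) + \<phi> g * exp (l * real (card J)))"
proof -
  define h1 where "h1 c = exp (l * (real c - q * real (card U)))" for c :: nat
  define h2 where "h2 c = exp (l * (real c - q * real (card J)))" for c :: nat
  have mono: "mono h1" "mono h2" unfolding h1_def h2_def mono_def using l by (auto intro!: mult_left_mono)
  have disj: "U \<inter> J = {}"
  proof -
    have "x \<le> a" if "x \<in> U" for x using that a(2) by auto
    moreover have "a + g \<le> x" if "x \<in> J" for x using that g(2) by auto
    ultimately show ?thesis using g(1) by fastforce
  qed
  have "(\<integral>\<omega>. exp (l * centred_hits (U \<union> J) \<omega>) \<partial>M) = (\<integral>\<omega>. h1 (hits U \<omega>) * h2 (hits J \<omega>) \<partial>M)"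
    unfolding centred_hits_Un[OF fin disj] by (simp add: h1_def h2_def centred_hits_def distrib_left exp_add)
  also have "\<dots> \<le> (\<integral>\<omega>. h1 (hits U \<omega>) \<partial>M) * ((\<integral>\<omega>. h2 (hits J \<omega>) \<partial>M) + \<phi> g * h2 (card J))"
    by (rule integral_mult_hits_le_mixing[OF fin a g(2) mono(1) _ mono(2)]) (simp_all add: h1_def h2_def)
  also have "\<dots> \<le> (\<integral>\<omega>. h1 (hits U \<omega>) \<partial>M) * ((\<integral>\<omega>. h2 (hits J \<omega>) \<partial>M) + \<phi> g * exp (l * real (card J)))"
    using l q_bounds mixing_phi_nonneg
    by (intro mult_left_mono add_left_mono integral_nonneg_AE)
       (auto simp: h1_def h2_def intro!: mult_left_mono)
  finally show ?thesis unfolding h1_def h2_def centred_hits_def .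
qed

lemma prob_centred_hits_ge_le:
  assumes "finite J" "J \<subseteq> {1..}" "0 < l"
  shows "prob {\<omega>\<in>space M. t \<le> centred_hits J \<omega>} \<le> exp (- l * t) * (\<integral>\<omega>. exp (l * centred_hits J \<omega>) \<partial>M)"
proof -
  have "{\<omega>\<in>space M. t \<le> centred_hits J \<omega>} = {\<omega>\<in>space M. exp (l * t) \<le> exp (l * centred_hits J \<omega>)}"
    using assms(3) by auto
  also have "prob \<dots> \<le> (\<integral>\<omega>. exp (l * centred_hits J \<omega>) \<partial>M) / exp (l * t)"
    using assms(1,2) by (intro integral_Markov_inequality_measure integrable_fun_centred_hits continuous_intros) auto
  finally show ?thesis by (simp add: exp_minus field_simps)
qed

end

section \<open>Bernstein blocking\<close>

definition block :: "nat \<Rightarrow> nat \<Rightarrow> nat \<Rightarrow> nat set" where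
  "block n L b = {i\<in>{1..n}. (i - 1) div L = b}"

definition parity_blocks :: "nat \<Rightarrow> nat \<Rightarrow> nat \<Rightarrow> nat \<Rightarrow> nat set" where
  "parity_blocks n L s k = (\<Union>b<k. block n L (2 * b + s))"

lemma block_subset_atLeastAtMost: "block n L b \<subseteq> {1..n}"
  unfolding block_def by auto

lemma finite_block: "finite (block n L b)"
  using finite_subset[OF block_subset_atLeastAtMost] by blast

lemma block_subset:
  assumes "1 \<le> L"
  shows "block n L b \<subseteq> {b * L + 1..b * L + L}"
proof
  fix i assume "i \<in> block n L b"
  then obtain d where d: "i = Suc d" "d div L = b" by (cases i) (auto simp: block_def)
  have "b * L + d mod L = d" using div_mult_mod_eq[of d L] by (simp only: d(2))
  moreover have "d mod L < L" using assms by simp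
  ultimately show "i \<in> {b * L + 1..b * L + L}" unfolding d(1) atLeastAtMost_iff by linarith
qed

lemma card_block_le:
  assumes "1 \<le> L"
  shows "card (block n L b) \<le> L"
  using card_mono[OF finite_atLeastAtMost block_subset[OF assms, of n b]] by simp

lemma parity_blocks_0: "parity_blocks n L s 0 = {}"
  by (simp add: parity_blocks_def)

lemma parity_blocks_Suc: "parity_blocks n L s (Suc k) = parity_blocks n L s k \<union> block n L (2 * k + s)"
  by (simp add: parity_blocks_def lessThan_Suc Un_commute)

lemma parity_blocks_subset_atLeastAtMost: "parity_blocks n L s k \<subseteq> {1..n}"
  unfolding parity_blocks_def using block_subset_atLeastAtMost by blast

lemma finite_parity_blocks: "finite (parity_blocks n L s k)"
  using finite_subset[OF parity_blocks_subset_atLeastAtMost] by blast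

lemma parity_blocks_subset:
  assumes "1 \<le> L" "1 \<le> k"
  shows "parity_blocks n L s k \<subseteq> {1..(2 * k - 1 + s) * L}"
proof -
  have "block n L (2 * b + s) \<subseteq> {1..(2 * k - 1 + s) * L}" if "b < k" for b
  proof -
    have "2 * b + s + 1 \<le> 2 * k - 1 + s" using that by arith
    from mult_le_mono1[OF this, of L] have "(2 * b + s) * L + L \<le> (2 * k - 1 + s) * L"
      by (simp add: algebra_simps)
    then show ?thesis using block_subset[OF assms(1), of n "2 * b + s"] by auto
  qed
  then show ?thesis unfolding parity_blocks_def by blast
qed

lemma Un_parity_blocks:
  assumes "n div L < k"
  shows "parity_blocks n L 0 k \<union> parity_blocks n L 1 k = {1..n}"
proof (intro equalityI subsetI)
  fix i assume i: "i \<in> {1..n}"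
  define b where "b = (i - 1) div L"
  have "b \<le> n div L" using i unfolding b_def by (intro div_le_mono) auto
  then have "b div 2 < k" using assms by linarith
  moreover have "i \<in> block n L (2 * (b div 2) + b mod 2)" using i by (simp add: block_def b_def)
  ultimately have "i \<in> parity_blocks n L (b mod 2) k" unfolding parity_blocks_def by blast
  then show "i \<in> parity_blocks n L 0 k \<union> parity_blocks n L 1 k" by (cases "b mod 2 = 0") auto
qed (use parity_blocks_subset_atLeastAtMost in blast)

lemma mod_2_of_mem_parity_blocks:
  "i \<in> parity_blocks n L s k \<Longrightarrow> s < 2 \<Longrightarrow> (i - 1) div L mod 2 = s"
  unfolding parity_blocks_def block_def by auto

lemma parity_blocks_disjoint: "parity_blocks n L 0 k \<inter> parity_blocks n L 1 k = {}"
proof (rule equals0I)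
  fix i assume "i \<in> parity_blocks n L 0 k \<inter> parity_blocks n L 1 k"
  then have "(i - 1) div L mod 2 = 0" "(i - 1) div L mod 2 = 1"
    using mod_2_of_mem_parity_blocks[of i n L 0 k] mod_2_of_mem_parity_blocks[of i n L 1 k] by auto
  then show False by simp
qed

lemma block_length_bounds:
  fixes n :: nat
  assumes n: "3 \<le> n"
  defines "L \<equiv> nat \<lfloor>sqrt (real n / ln (real n))\<rfloor>" and "l \<equiv> sqrt (ln (real n) / real n)"
  shows "1 \<le> L" "0 < l" "l * real L \<le> 1" "l\<^sup>2 = ln (real n) / real n" "real L \<le> real n"
    "real n < 4 * (real L)\<^sup>2 * ln (real n)" "1 \<le> ln (real n)"
proof -
  define r where "r = sqrt (real n / ln (real n))"
  have n_pos: "0 < real n" using n by simp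
  show ln_ge_1: "1 \<le> ln (real n)"
    using n e_less_272 by (subst ln_ge_iff) auto
  have r_sq: "r\<^sup>2 = real n / ln (real n)" unfolding r_def using ln_ge_1 by simp
  have "ln (real n) \<le> real n" using ln_less_self[OF n_pos] by linarith
  then have "1 \<le> real n / ln (real n)" using ln_ge_1 n by (subst le_divide_eq_1_pos) auto
  then have r_ge_1: "1 \<le> r" unfolding r_def by simp
  have "real n / ln (real n) \<le> real n"
    using ln_ge_1 n_pos by (simp add: divide_le_eq mult_le_cancel_left1)
  also have "\<dots> \<le> (real n)\<^sup>2" using n by (simp add: power2_eq_square)
  finally have "r \<le> real n" unfolding r_def using real_sqrt_le_mono by fastforce
  moreover have L_r: "real L \<le> r" "r < real L + 1" unfolding L_def r_def[symmetric] using r_ge_1 by linarith+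
  ultimately show "real L \<le> real n" by linarith
  show L: "1 \<le> L" unfolding L_def r_def[symmetric] using r_ge_1 by linarith
  show "0 < l" unfolding l_def using ln_ge_1 n_pos n by (intro real_sqrt_gt_zero divide_pos_pos) auto
  have "l * r = 1" unfolding l_def r_def using ln_ge_1 n_pos n by (simp add: real_sqrt_mult[symmetric])
  then show "l * real L \<le> 1"
    using L_r(1) \<open>0 < l\<close> by (metis mult_left_mono less_eq_real_def)
  show "l\<^sup>2 = ln (real n) / real n" unfolding l_def using ln_ge_1 by simp
  have "r\<^sup>2 < (2 * real L)\<^sup>2" using L_r r_ge_1 L by (intro power_strict_mono) auto
  then show "real n < 4 * (real L)\<^sup>2 * ln (real n)" unfolding r_sq using ln_ge_1 by (simp add: divide_less_eq)
qed

context phi_mixing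
begin

definition tail_const :: real where
  "tail_const = 2 * (1 + 2 * phi_sum) + 15 * phi_sum"

lemma block_exponent_le:
  fixes n :: nat
  assumes n: "3 \<le> n"
  defines "L \<equiv> nat \<lfloor>sqrt (real n / ln (real n))\<rfloor>" and "l \<equiv> sqrt (ln (real n) / real n)"
  shows "real (n div L + 1) * (l\<^sup>2 * (real L * (1 + 2 * phi_sum)) + \<phi> L * exp 1) \<le> tail_const * ln (real n)"
proof -
  note bounds = block_length_bounds[OF n, folded L_def l_def]
  define D where "D = 1 + 2 * phi_sum"
  have n_pos: "0 < real n" using n by simp
  have div_L: "real (n div L) * real L \<le> real n"
    using div_times_less_eq_dividend[of n L] by (simp flip: of_nat_mult)
  have "real (n div L + 1) * (l\<^sup>2 * (real L * D)) = (real (n div L) * real L + real L) * D * ln (real n) / real n"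
    unfolding bounds(4) by (simp add: algebra_simps)
  also have "\<dots> \<le> (2 * real n) * D * ln (real n) / real n"
    using div_L bounds(5,7) phi_sum_nonneg by (intro divide_right_mono mult_right_mono) (auto simp: D_def)
  finally have variance_part: "real (n div L + 1) * (l\<^sup>2 * (real L * D)) \<le> 2 * D * ln (real n)"
    using n_pos by simp
  have "real (n div L) * real L < (4 * real L * ln (real n)) * real L"
    using div_L bounds(6) by (simp add: power2_eq_square algebra_simps)
  then have "real (n div L) \<le> 4 * real L * ln (real n)" by (auto dest: mult_right_less_imp_less)
  then have "real (n div L) * \<phi> L \<le> (4 * real L * ln (real n)) * \<phi> L"
    by (rule mult_right_mono[OF _ mixing_phi_nonneg])
  also have "\<dots> = 4 * ln (real n) * (real L * \<phi> L)" by (simp add: algebra_simps)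
  also have "\<dots> \<le> 4 * ln (real n) * phi_sum"
    using mult_mixing_phi_le_phi_sum[of L] bounds(7) by (intro mult_left_mono) auto
  finally have "real (n div L + 1) * \<phi> L \<le> 5 * phi_sum * ln (real n)"
    using mixing_phi_le_phi_sum[OF bounds(1)] mult_left_mono[OF bounds(7) phi_sum_nonneg]
    by (simp add: algebra_simps)
  then have "real (n div L + 1) * \<phi> L * exp 1 \<le> 5 * phi_sum * ln (real n) * 3"
    by (rule mult_mono) (use e_less_272 phi_sum_nonneg bounds(7) in auto)
  with variance_part show ?thesis
    unfolding tail_const_def D_def by (simp add: algebra_simps)
qed

end

context phi_mixing_events
begin

lemma integral_exp_centred_hits_block_le:
  assumes L: "1 \<le> L" and l: "0 \<le> l" "l * real L \<le> 1"
  shows "(\<integral>\<omega>. exp (l * centred_hits (block n L b) \<omega>) \<partial>M) \<le> 1 + l\<^sup>2 * (real L * (1 + 2 * phi_sum))"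
proof -
  have J: "finite (block n L b)" "block n L b \<subseteq> {1..}"
    using finite_block block_subset_atLeastAtMost[of n L b] by auto
  have "l * real (card (block n L b)) \<le> l * real L" using card_block_le[OF L] l(1) by (intro mult_left_mono) auto
  then have "l * real (card (block n L b)) \<le> 1" using l(2) by linarith
  then have "(\<integral>\<omega>. exp (l * centred_hits (block n L b) \<omega>) \<partial>M)
      \<le> 1 + l\<^sup>2 * (real (card (block n L b)) * (1 + 2 * phi_sum))"
    by (rule integral_exp_centred_hits_le[OF J l(1)])
  also have "\<dots> \<le> 1 + l\<^sup>2 * (real L * (1 + 2 * phi_sum))"
    using card_block_le[OF L] phi_sum_nonneg by (intro add_left_mono mult_left_mono mult_right_mono) auto
  finally show ?thesis .
qed

lemma integral_exp_centred_hits_parity_blocks_Suc_le: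
  assumes L: "1 \<le> L" and k: "1 \<le> k" and l: "0 \<le> l" "l * real L \<le> 1"
  shows "(\<integral>\<omega>. exp (l * centred_hits (parity_blocks n L s (Suc k)) \<omega>) \<partial>M)
    \<le> (\<integral>\<omega>. exp (l * centred_hits (parity_blocks n L s k) \<omega>) \<partial>M)
      * (1 + l\<^sup>2 * (real L * (1 + 2 * phi_sum)) + \<phi> L * exp 1)"
proof -
  let ?U = "parity_blocks n L s k" and ?J = "block n L (2 * k + s)"
  define a where "a = (2 * k - 1 + s) * L"
  have U: "1 \<le> a" "?U \<subseteq> {1..a}" using k L parity_blocks_subset[OF L k, of n s] by (auto simp: a_def)
  have "a + (L + 1) = (2 * k + s) * L + 1" using k by (cases k) (simp_all add: a_def algebra_simps)
  then have J: "?J \<subseteq> {a + (L + 1)..}" using block_subset[OF L, of n "2 * k + s"] by auto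
  have "l * real (card ?J) \<le> l * real L" using card_block_le[OF L] l(1) by (intro mult_left_mono) auto
  then have "\<phi> (L + 1) * exp (l * real (card ?J)) \<le> \<phi> L * exp 1"
    using decseq_phi l(2) mixing_phi_nonneg by (intro mult_mono) (auto simp: decseq_Suc_iff)
  then have "(\<integral>\<omega>. exp (l * centred_hits ?J \<omega>) \<partial>M) + \<phi> (L + 1) * exp (l * real (card ?J))
      \<le> 1 + l\<^sup>2 * (real L * (1 + 2 * phi_sum)) + \<phi> L * exp 1"
    by (rule add_mono[OF integral_exp_centred_hits_block_le[OF L l]])
  moreover have "(\<integral>\<omega>. exp (l * centred_hits (?U \<union> ?J) \<omega>) \<partial>M)
      \<le> (\<integral>\<omega>. exp (l * centred_hits ?U \<omega>) \<partial>M)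
        * ((\<integral>\<omega>. exp (l * centred_hits ?J \<omega>) \<partial>M) + \<phi> (L + 1) * exp (l * real (card ?J)))"
    using U J l(1) by (intro integral_exp_centred_hits_Un_le finite_parity_blocks finite_block) auto
  moreover have "0 \<le> (\<integral>\<omega>. exp (l * centred_hits ?U \<omega>) \<partial>M)" by (simp add: integral_nonneg_AE)
  ultimately show ?thesis unfolding parity_blocks_Suc by (meson mult_left_mono order_trans)
qed

lemma integral_exp_centred_hits_parity_blocks_le:
  assumes L: "1 \<le> L" and l: "0 \<le> l" "l * real L \<le> 1"
  shows "(\<integral>\<omega>. exp (l * centred_hits (parity_blocks n L s k) \<omega>) \<partial>M)
    \<le> (1 + l\<^sup>2 * (real L * (1 + 2 * phi_sum)) + \<phi> L * exp 1) ^ k"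
proof (induction k)
  case 0
  show ?case by (simp add: parity_blocks_0 centred_hits_empty prob_space)
next
  case (Suc k)
  let ?F = "1 + l\<^sup>2 * (real L * (1 + 2 * phi_sum)) + \<phi> L * exp 1"
  have phi_exp: "0 \<le> \<phi> L * exp 1" using mixing_phi_nonneg by simp
  show ?case
  proof (cases "k = 0")
    case True
    then show ?thesis
      using integral_exp_centred_hits_block_le[OF L l, of n s] phi_exp by (simp add: parity_blocks_Suc parity_blocks_0)
  next
    case False
    then have "(\<integral>\<omega>. exp (l * centred_hits (parity_blocks n L s (Suc k)) \<omega>) \<partial>M)
        \<le> (\<integral>\<omega>. exp (l * centred_hits (parity_blocks n L s k) \<omega>) \<partial>M) * ?F"
      using integral_exp_centred_hits_parity_blocks_Suc_le[OF L _ l] by simp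
    also have "\<dots> \<le> ?F ^ k * ?F"
      using Suc.IH phi_sum_nonneg phi_exp by (intro mult_right_mono) auto
    finally show ?thesis by (simp add: mult.commute)
  qed
qed

lemma prob_centred_hits_ge_le_blocks:
  assumes L: "1 \<le> L" and l: "0 < l" "l * real L \<le> 1" and k: "n div L < k"
  shows "prob {\<omega>\<in>space M. 2 * t \<le> centred_hits {1..n} \<omega>}
    \<le> 2 * ((1 + l\<^sup>2 * (real L * (1 + 2 * phi_sum)) + \<phi> L * exp 1) ^ k * exp (- l * t))"
proof -
  let ?F = "(1 + l\<^sup>2 * (real L * (1 + 2 * phi_sum)) + \<phi> L * exp 1) ^ k"
  let ?A = "\<lambda>s. {\<omega>\<in>space M. t \<le> centred_hits (parity_blocks n L s k) \<omega>}"
  have events: "?A s \<in> events" for s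
  proof -
    have "centred_hits (parity_blocks n L s k) \<in> borel_measurable M"
      using parity_blocks_subset_atLeastAtMost[of n L s k]
      by (intro borel_measurable_centred_hits finite_parity_blocks) auto
    then show ?thesis by (rule borel_measurable_le[OF borel_measurable_const])
  qed
  have "centred_hits {1..n} \<omega> = centred_hits (parity_blocks n L 0 k) \<omega> + centred_hits (parity_blocks n L 1 k) \<omega>" for \<omega>
    unfolding Un_parity_blocks[OF k, symmetric]
    by (rule centred_hits_Un[OF finite_parity_blocks finite_parity_blocks parity_blocks_disjoint])
  then have "{\<omega>\<in>space M. 2 * t \<le> centred_hits {1..n} \<omega>} \<subseteq> ?A 0 \<union> ?A 1" by force
  have tail: "prob (?A s) \<le> ?F * exp (- l * t)" for s
  proof -
    have "prob (?A s) \<le> exp (- l * t) * (\<integral>\<omega>. exp (l * centred_hits (parity_blocks n L s k) \<omega>) \<partial>M)"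
      using l(1) parity_blocks_subset_atLeastAtMost[of n L s k]
      by (intro prob_centred_hits_ge_le finite_parity_blocks) auto
    also have "\<dots> \<le> exp (- l * t) * ?F"
      using L l by (intro mult_left_mono integral_exp_centred_hits_parity_blocks_le) auto
    finally show ?thesis by (simp add: mult.commute)
  qed
  have "prob {\<omega>\<in>space M. 2 * t \<le> centred_hits {1..n} \<omega>} \<le> prob (?A 0 \<union> ?A 1)"
    using events \<open>_ \<subseteq> ?A 0 \<union> ?A 1\<close> by (intro finite_measure_mono) auto
  also have "\<dots> \<le> prob (?A 0) + prob (?A 1)" by (rule measure_Un_le[OF events events])
  also have "\<dots> \<le> 2 * (?F * exp (- l * t))" using tail[of 0] tail[of 1] by simp
  finally show ?thesis .
qed

lemma prob_centred_hits_ge_le_inverse_sq: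
  assumes n: "3 \<le> n"
  shows "prob {\<omega>\<in>space M. 2 * ((tail_const + 2) * sqrt (real n * ln (real n))) \<le> centred_hits {1..n} \<omega>}
    \<le> 2 / (real n)\<^sup>2"
proof -
  define L where "L = nat \<lfloor>sqrt (real n / ln (real n))\<rfloor>"
  define l where "l = sqrt (ln (real n) / real n)"
  define x where "x = l\<^sup>2 * (real L * (1 + 2 * phi_sum)) + \<phi> L * exp 1"
  note bounds = block_length_bounds[OF n, folded L_def l_def]
  have n_pos: "0 < real n" and ln_pos: "0 < ln (real n)" using n by auto
  have "(1 + x) ^ (n div L + 1) \<le> exp x ^ (n div L + 1)"
    using phi_sum_nonneg mixing_phi_nonneg[of L] by (intro power_mono) (auto simp: x_def)
  also have "\<dots> = exp (real (n div L + 1) * x)" by (rule exp_of_nat_mult[symmetric])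
  also have "\<dots> \<le> exp (tail_const * ln (real n))"
    using block_exponent_le[OF n, folded L_def l_def] by (simp add: x_def)
  finally have growth: "(1 + x) ^ (n div L + 1) \<le> exp (tail_const * ln (real n))" .
  have "l * sqrt (real n * ln (real n)) = ln (real n)"
    unfolding l_def using n_pos ln_pos by (simp add: real_sqrt_mult[symmetric] power2_eq_square[symmetric])
  then have decay: "exp (- l * ((tail_const + 2) * sqrt (real n * ln (real n))))
      = exp (- (tail_const + 2) * ln (real n))" by (simp add: mult.left_commute[of l]) (simp add: algebra_simps)
  have "prob {\<omega>\<in>space M. 2 * ((tail_const + 2) * sqrt (real n * ln (real n))) \<le> centred_hits {1..n} \<omega>}
      \<le> 2 * ((1 + x) ^ (n div L + 1) * exp (- l * ((tail_const + 2) * sqrt (real n * ln (real n)))))"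
    unfolding x_def add.assoc[symmetric] using bounds by (intro prob_centred_hits_ge_le_blocks) auto
  also have "\<dots> \<le> 2 * (exp (tail_const * ln (real n)) * exp (- (tail_const + 2) * ln (real n)))"
    unfolding decay using growth by (intro mult_left_mono mult_right_mono) auto
  also have "\<dots> = 2 / (real n)\<^sup>2"
    using n_pos by (simp add: exp_add[symmetric] algebra_simps exp_minus exp_double power2_eq_square divide_inverse)
  finally show ?thesis .
qed

end

section \<open>Sample quantiles\<close>

lemma Inf_superlevel_set_between:
  fixes G :: "real \<Rightarrow> real"
  assumes "mono G" "G a < p" "p \<le> G b"
  shows "a \<le> Inf {x. p \<le> G x}" "Inf {x. p \<le> G x} \<le> b"
proof -
  have lower: "a \<le> x" if "p \<le> G x" for x
    using that assms(1,2) monoD[of G x a] by (cases "a \<le> x") auto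
  show "a \<le> Inf {x. p \<le> G x}" using assms(3) lower by (intro cInf_greatest) auto
  show "Inf {x. p \<le> G x} \<le> b" using assms(3) lower by (intro cInf_lower bdd_belowI) auto
qed

lemma (in real_distribution) cdf_at_quantile:
  assumes p: "0 < p" "p < 1" and cont: "isCont (cdf M) (Inf {x. p \<le> cdf M x})"
  shows "cdf M (Inf {x. p \<le> cdf M x}) = p"
proof -
  define \<xi> where "\<xi> = Inf {x. p \<le> cdf M x}"
  obtain b where b: "\<And>x. x \<le> b \<Longrightarrow> cdf M x < p"
    using order_tendstoD(2)[OF cdf_lim_at_bot p(1)] by (auto simp: eventually_at_bot_linorder)
  obtain c where "\<And>x. c \<le> x \<Longrightarrow> p < cdf M x"
    using order_tendstoD(1)[OF cdf_lim_at_top_prob p(2)] by (auto simp: eventually_at_top_linorder)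
  then have "c \<in> {x. p \<le> cdf M x}" by (simp add: less_imp_le)
  then have nonempty: "{x. p \<le> cdf M x} \<noteq> {}" by blast
  have "b \<le> x" if "p \<le> cdf M x" for x
    using b[of x] that by (cases "x \<le> b") auto
  then have bdd: "bdd_below {x. p \<le> cdf M x}" by (intro bdd_belowI[of _ b]) simp
  have below: "cdf M x < p" if "x < \<xi>" for x
    using that cInf_lower[OF _ bdd, of x] unfolding \<xi>_def by force
  have above: "p \<le> cdf M x" if "\<xi> < x" for x
  proof -
    have "Inf {x. p \<le> cdf M x} < x" using that by (simp add: \<xi>_def)
    then obtain y where "p \<le> cdf M y" "y < x" using cInf_less_iff[OF nonempty bdd] by auto
    then show ?thesis using cdf_nondecreasing[of y x] by simp
  qed
  have "eventually (\<lambda>x. x \<in> {\<xi> - 1<..<\<xi>}) (at_left \<xi>)"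
    by (rule eventually_at_left_real) simp
  then have "eventually (\<lambda>x. cdf M x \<le> p) (at_left \<xi>)"
    by eventually_elim (use below in force)
  moreover have "eventually (\<lambda>x. p \<le> cdf M x) (at_right \<xi>)"
    using eventually_at_right_less[of \<xi>] by eventually_elim (rule above)
  moreover have "(cdf M \<longlongrightarrow> cdf M \<xi>) (at_left \<xi>)" "(cdf M \<longlongrightarrow> cdf M \<xi>) (at_right \<xi>)"
    using cont unfolding \<xi>_def[symmetric] isCont_def by (simp_all add: filterlim_at_split)
  ultimately have "cdf M \<xi> \<le> p" "p \<le> cdf M \<xi>"
    by (auto intro: tendsto_upperbound tendsto_lowerbound)
  then show ?thesis unfolding \<xi>_def by simp
qed

lemma eventually_linear_bounds_of_DERIV:
  fixes F :: "real \<Rightarrow> real"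
  assumes "(F has_real_derivative d) (at x)" "m < d"
  shows "eventually (\<lambda>t. F x + m * t < F (x + t) \<and> F (x - t) < F x - m * t) (at_right 0)"
proof -
  have der: "((\<lambda>y. F y - m * y) has_real_derivative d - m) (at x)"
    by (auto intro!: derivative_eq_intros assms(1))
  obtain \<delta>1 where "0 < \<delta>1" and right: "\<And>t. 0 < t \<Longrightarrow> t < \<delta>1 \<Longrightarrow> F x - m * x < F (x + t) - m * (x + t)"
    using DERIV_pos_inc_right[OF der] assms(2) by auto
  obtain \<delta>2 where "0 < \<delta>2" and left: "\<And>t. 0 < t \<Longrightarrow> t < \<delta>2 \<Longrightarrow> F (x - t) - m * (x - t) < F x - m * x"
    using DERIV_pos_inc_left[OF der] assms(2) by auto
  show ?thesis unfolding eventually_at_right_field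
    using right left \<open>0 < \<delta>1\<close> \<open>0 < \<delta>2\<close> by (intro exI[of _ "min \<delta>1 \<delta>2"]) (auto simp: algebra_simps)
qed

lemma quantile_linearization_le:
  fixes G F :: "real \<Rightarrow> real"
  assumes "mono G" "0 < \<epsilon>" "0 < m" "0 < c"
    and F: "p + 2 * \<epsilon> \<le> F (\<xi> + 2 * \<epsilon> / m)" "F (\<xi> - 2 * \<epsilon> / m) \<le> p - 2 * \<epsilon>"
    and G: "\<bar>G (\<xi> + 2 * \<epsilon> / m) - F (\<xi> + 2 * \<epsilon> / m)\<bar> \<le> \<epsilon>"
      "\<bar>G (\<xi> - 2 * \<epsilon> / m) - F (\<xi> - 2 * \<epsilon> / m)\<bar> \<le> \<epsilon>" "\<bar>G \<xi> - p\<bar> \<le> \<epsilon>"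
  shows "\<bar>Inf {x. p \<le> G x} - (\<xi> - (G \<xi> - p) / c)\<bar> \<le> (2 / m + 1 / c) * \<epsilon>"
proof -
  have "G (\<xi> - 2 * \<epsilon> / m) < p" "p \<le> G (\<xi> + 2 * \<epsilon> / m)" using assms(2) F G by linarith+
  from Inf_superlevel_set_between[OF assms(1) this]
  have "\<bar>Inf {x. p \<le> G x} - \<xi>\<bar> \<le> 2 * \<epsilon> / m" by linarith
  moreover have "\<bar>(G \<xi> - p) / c\<bar> \<le> \<epsilon> / c" using G(3) assms(4) by (simp add: abs_divide divide_right_mono)
  moreover have "(2 / m + 1 / c) * \<epsilon> = 2 * \<epsilon> / m + \<epsilon> / c" by (simp add: field_simps)
  ultimately show ?thesis by linarith
qed

lemma real_mult_emp_df: "real n * emp_df X n \<omega> y = (\<Sum>i=1..n. if X i \<omega> \<le> y then 1 else 0)"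
  unfolding emp_df_def by (cases "n = 0") auto

lemma mono_emp_df: "mono (emp_df X n \<omega>)"
  unfolding emp_df_def mono_def by (auto intro!: divide_right_mono sum_mono)

definition log_rate :: "nat \<Rightarrow> real" where
  "log_rate n = sqrt (ln (real n)) / sqrt (real n)"

lemma log_rate_pos: "2 \<le> n \<Longrightarrow> 0 < log_rate n"
  unfolding log_rate_def by simp

lemma log_rate_tendsto_zero: "log_rate \<longlonglongrightarrow> 0"
  unfolding log_rate_def[abs_def] real_sqrt_divide[symmetric]
  by (intro tendsto_eq_intros lim_ln_over_n) simp_all

lemma real_mult_log_rate: "real n * log_rate n = sqrt (real n * ln (real n))"
  unfolding log_rate_def by (cases "n = 0") (simp_all add: real_sqrt_mult field_simps)

locale phi_mixing_marginal = phi_mixing +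
  fixes F :: "real \<Rightarrow> real"
  assumes marginal: "\<And>i x. 1 \<le> i \<Longrightarrow> F x = prob {\<omega>\<in>space M. X i \<omega> \<le> x}"
begin

lemma phi_mixing_events_le: "phi_mixing_events M X (\<lambda>i. {\<omega>\<in>space M. X i \<omega> \<le> y}) (F y)"
proof (intro phi_mixing_events.intro phi_mixing_events_axioms.intro)
  show "phi_mixing M X" by unfold_locales
  fix i :: nat assume i: "1 \<le> i"
  have "X i -` {..y} \<inter> space M \<in> gen_sigma M X {i}" by (rule vimage_in_gen_sigma) auto
  moreover have "X i -` {..y} \<inter> space M = {\<omega>\<in>space M. X i \<omega> \<le> y}" by auto
  ultimately show "{\<omega>\<in>space M. X i \<omega> \<le> y} \<in> gen_sigma M X {i}" by simp
  show "prob {\<omega>\<in>space M. X i \<omega> \<le> y} = F y" using marginal[OF i] by simp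
qed

lemma phi_mixing_events_gt: "phi_mixing_events M X (\<lambda>i. {\<omega>\<in>space M. y < X i \<omega>}) (1 - F y)"
proof (intro phi_mixing_events.intro phi_mixing_events_axioms.intro)
  show "phi_mixing M X" by unfold_locales
  fix i :: nat assume i: "1 \<le> i"
  have "X i -` {y<..} \<inter> space M \<in> gen_sigma M X {i}" by (rule vimage_in_gen_sigma) auto
  moreover have "X i -` {y<..} \<inter> space M = {\<omega>\<in>space M. y < X i \<omega>}" by auto
  ultimately show "{\<omega>\<in>space M. y < X i \<omega>} \<in> gen_sigma M X {i}" by simp
  have "{\<omega>\<in>space M. y < X i \<omega>} = space M - {\<omega>\<in>space M. X i \<omega> \<le> y}" by auto
  then show "prob {\<omega>\<in>space M. y < X i \<omega>} = 1 - F y"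
    using marginal[OF i] random_variable_X[OF i] by (simp add: prob_compl)
qed

lemma borel_measurable_emp_df [measurable]: "(\<lambda>\<omega>. emp_df X n \<omega> y) \<in> borel_measurable M"
  unfolding emp_df_def using random_variable_X
  by (intro borel_measurable_divide borel_measurable_sum borel_measurable_const) auto

lemma centred_hits_le_eq:
  assumes "\<omega> \<in> space M"
  shows "phi_mixing_events.centred_hits (\<lambda>i. {\<omega>\<in>space M. X i \<omega> \<le> y}) (F y) {1..n} \<omega>
    = real n * (emp_df X n \<omega> y - F y)"
proof -
  interpret le: phi_mixing_events M X "\<lambda>i. {\<omega>\<in>space M. X i \<omega> \<le> y}" "F y" by (rule phi_mixing_events_le)
  have "real (le.hits {1..n} \<omega>) = (\<Sum>i=1..n. if X i \<omega> \<le> y then 1 else 0)"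
    using assms unfolding le.hits_eq_sum_indicator[OF finite_atLeastAtMost]
    by (intro sum.cong) (auto simp: indicator_def)
  then show ?thesis unfolding le.centred_hits_def by (simp add: real_mult_emp_df algebra_simps)
qed

lemma centred_hits_gt_eq:
  assumes "\<omega> \<in> space M"
  shows "phi_mixing_events.centred_hits (\<lambda>i. {\<omega>\<in>space M. y < X i \<omega>}) (1 - F y) {1..n} \<omega>
    = - (real n * (emp_df X n \<omega> y - F y))"
proof -
  interpret gt: phi_mixing_events M X "\<lambda>i. {\<omega>\<in>space M. y < X i \<omega>}" "1 - F y" by (rule phi_mixing_events_gt)
  have "real (gt.hits {1..n} \<omega>) = (\<Sum>i=1..n. 1 - (if X i \<omega> \<le> y then 1 else 0))"
    using assms unfolding gt.hits_eq_sum_indicator[OF finite_atLeastAtMost]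
    by (intro sum.cong) (auto simp: indicator_def)
  then show ?thesis unfolding gt.centred_hits_def by (simp add: sum_subtractf real_mult_emp_df algebra_simps)
qed

lemma prob_emp_df_dev_ge_le:
  assumes n: "3 \<le> n"
  shows "prob {\<omega>\<in>space M. 2 * (tail_const + 2) * log_rate n \<le> \<bar>emp_df X n \<omega> y - F y\<bar>} \<le> 4 / (real n)\<^sup>2"
proof -
  interpret le: phi_mixing_events M X "\<lambda>i. {\<omega>\<in>space M. X i \<omega> \<le> y}" "F y" by (rule phi_mixing_events_le)
  interpret gt: phi_mixing_events M X "\<lambda>i. {\<omega>\<in>space M. y < X i \<omega>}" "1 - F y" by (rule phi_mixing_events_gt)
  let ?c = "2 * ((tail_const + 2) * sqrt (real n * ln (real n)))"
  let ?Le = "{\<omega>\<in>space M. ?c \<le> le.centred_hits {1..n} \<omega>}"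
  let ?Gt = "{\<omega>\<in>space M. ?c \<le> gt.centred_hits {1..n} \<omega>}"
  have sub: "{\<omega>\<in>space M. 2 * (tail_const + 2) * log_rate n \<le> \<bar>emp_df X n \<omega> y - F y\<bar>} \<subseteq> ?Le \<union> ?Gt"
  proof
    fix \<omega> assume "\<omega> \<in> {\<omega>\<in>space M. 2 * (tail_const + 2) * log_rate n \<le> \<bar>emp_df X n \<omega> y - F y\<bar>}"
    then have \<omega>: "\<omega> \<in> space M" and dev: "2 * (tail_const + 2) * log_rate n \<le> \<bar>emp_df X n \<omega> y - F y\<bar>"
      by auto
    have "?c \<le> \<bar>real n * (emp_df X n \<omega> y - F y)\<bar>"
      using mult_left_mono[OF dev, of "real n"] by (simp add: abs_mult real_mult_log_rate[symmetric] mult_ac)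
    then have "?c \<le> le.centred_hits {1..n} \<omega> \<or> ?c \<le> gt.centred_hits {1..n} \<omega>"
      unfolding centred_hits_le_eq[OF \<omega>] centred_hits_gt_eq[OF \<omega>] by linarith
    then show "\<omega> \<in> ?Le \<union> ?Gt" using \<omega> by blast
  qed
  have "{1..n} \<subseteq> {1::nat..}" by auto
  note centred_measurable = le.borel_measurable_centred_hits[OF finite_atLeastAtMost this]
    gt.borel_measurable_centred_hits[OF finite_atLeastAtMost this]
  have events: "?Le \<in> events" "?Gt \<in> events"
    by (rule borel_measurable_le[OF borel_measurable_const centred_measurable(1)],
        rule borel_measurable_le[OF borel_measurable_const centred_measurable(2)])
  have "prob {\<omega>\<in>space M. 2 * (tail_const + 2) * log_rate n \<le> \<bar>emp_df X n \<omega> y - F y\<bar>}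
      \<le> prob (?Le \<union> ?Gt)"
    by (rule finite_measure_mono[OF sub sets.Un[OF events]])
  also have "\<dots> \<le> prob ?Le + prob ?Gt" by (rule measure_Un_le[OF events])
  also have "\<dots> \<le> 2 / (real n)\<^sup>2 + 2 / (real n)\<^sup>2"
    using le.prob_centred_hits_ge_le_inverse_sq[OF n] gt.prob_centred_hits_ge_le_inverse_sq[OF n] by simp
  finally show ?thesis by simp
qed

lemma AE_eventually_emp_df_dev_le:
  "AE \<omega> in M. eventually (\<lambda>n. \<bar>emp_df X n \<omega> (y n) - F (y n)\<bar> \<le> 2 * (tail_const + 2) * log_rate n) sequentially"
proof -
  define B where "B n = {\<omega>\<in>space M. 2 * (tail_const + 2) * log_rate n \<le> \<bar>emp_df X n \<omega> (y n) - F (y n)\<bar>}"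
    for n
  define A where "A n = (if 3 \<le> n then B n else {})" for n
  have "B n \<in> events" for n unfolding B_def by measurable
  then have events: "A n \<in> events" for n by (simp add: A_def)
  have "prob (A n) \<le> 4 * inverse ((real n)\<^sup>2)" for n
    using prob_emp_df_dev_ge_le[of n "y n"] by (auto simp: A_def B_def divide_inverse)
  then have "summable (\<lambda>n. prob (A n))"
    by (intro summable_comparison_test'[OF summable_mult[OF inverse_power_summable]]) auto
  with events have "AE \<omega> in M. eventually (\<lambda>n. \<omega> \<in> space M - A n) sequentially"
    by (intro borel_cantelli_AE1) (auto simp: emeasure_finite less_top[symmetric])
  then show ?thesis
  proof (rule AE_mp[OF _ AE_I2], intro impI)
    fix \<omega> assume "eventually (\<lambda>n. \<omega> \<in> space M - A n) sequentially"
    then show "eventually (\<lambda>n. \<bar>emp_df X n \<omega> (y n) - F (y n)\<bar> \<le> 2 * (tail_const + 2) * log_rate n) sequentially"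
      using eventually_ge_at_top[of 3] by eventually_elim (auto simp: A_def B_def)
  qed
qed

lemma AE_emp_quantile_linearization_bigo:
  assumes m: "0 < m" and c: "0 < c" and F_\<xi>: "F \<xi> = p"
    and lin: "eventually (\<lambda>t. F \<xi> + m * t < F (\<xi> + t) \<and> F (\<xi> - t) < F \<xi> - m * t) (at_right 0)"
  shows "AE \<omega> in M. (\<lambda>n. Inf {x. p \<le> emp_df X n \<omega> x} - (\<xi> - (emp_df X n \<omega> \<xi> - p) / c)) \<in> O(log_rate)"
proof -
  define K where "K = 2 * (tail_const + 2)"
  have K: "0 < K" unfolding K_def tail_const_def using phi_sum_nonneg by simp
  have "(\<lambda>n. 2 * (K * log_rate n) / m) \<longlonglongrightarrow> 0"
    using log_rate_tendsto_zero m by (auto intro!: tendsto_eq_intros)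
  moreover have "eventually (\<lambda>n. 0 < 2 * (K * log_rate n) / m) sequentially"
    using eventually_ge_at_top[of 2] by eventually_elim (use m K log_rate_pos in auto)
  ultimately have "filterlim (\<lambda>n. 2 * (K * log_rate n) / m) (at_right 0) sequentially"
    by (rule tendsto_imp_filterlim_at_right)
  from eventually_compose_filterlim[OF lin this]
  have lin_n: "eventually (\<lambda>n. p + 2 * (K * log_rate n) < F (\<xi> + 2 * (K * log_rate n) / m)
      \<and> F (\<xi> - 2 * (K * log_rate n) / m) < p - 2 * (K * log_rate n)) sequentially"
    using m F_\<xi> by simp
  have dev: "AE \<omega> in M. eventually (\<lambda>n. \<bar>emp_df X n \<omega> (y n) - F (y n)\<bar> \<le> K * log_rate n) sequentially" for y
    unfolding K_def by (rule AE_eventually_emp_df_dev_le)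
  show ?thesis
    using dev[of "\<lambda>_. \<xi>"] dev[of "\<lambda>n. \<xi> + 2 * (K * log_rate n) / m"] dev[of "\<lambda>n. \<xi> - 2 * (K * log_rate n) / m"]
  proof eventually_elim
    case (elim \<omega>)
    from elim lin_n eventually_ge_at_top[of 2]
    have "eventually (\<lambda>n. norm (Inf {x. p \<le> emp_df X n \<omega> x} - (\<xi> - (emp_df X n \<omega> \<xi> - p) / c))
        \<le> (2 / m + 1 / c) * K * norm (log_rate n)) sequentially"
    proof eventually_elim
      case (elim n)
      then have "\<bar>Inf {x. p \<le> emp_df X n \<omega> x} - (\<xi> - (emp_df X n \<omega> \<xi> - p) / c)\<bar> \<le> (2 / m + 1 / c) * (K * log_rate n)"
        using F_\<xi> m c K log_rate_pos[of n] by (intro quantile_linearization_le mono_emp_df) auto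
      then show ?case using log_rate_pos[of n] elim by (simp add: mult.assoc)
    qed
    then show ?case by (rule bigoI)
  qed
qed

end

lemma summable_of_summable_sqrt:
  fixes a :: "nat \<Rightarrow> real"
  assumes nonneg: "\<And>n. 0 \<le> a n" and summable: "summable (\<lambda>n. sqrt (a n))"
  shows "summable a"
proof (rule summable_comparison_test_ev[OF _ summable])
  have "eventually (\<lambda>n. sqrt (a n) < 1) sequentially"
    using summable_LIMSEQ_zero[OF summable] by (rule order_tendstoD) simp
  then show "eventually (\<lambda>n. norm (a n) \<le> sqrt (a n)) sequentially"
  proof eventually_elim
    case (elim n)
    have "a n = sqrt (a n) * sqrt (a n)" using nonneg by simp
    also have "\<dots> \<le> sqrt (a n)" using elim nonneg[of n] by (intro mult_left_le_one_le) auto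
    finally show ?case using nonneg[of n] by (simp only: real_norm_def abs_of_nonneg)
  qed
qed

theorem theorem2p5:
  fixes M :: "'a measure" and X :: "nat \<Rightarrow> 'a \<Rightarrow> real"
    and F f :: "real \<Rightarrow> real" and p :: real and N :: "real set"
  assumes "prob_space M"
    and rv: "\<And>i. i \<ge> 1 \<Longrightarrow> X i \<in> borel_measurable M"
    and marg: "\<And>i x. i \<ge> 1 \<Longrightarrow> F x = measure M {\<omega> \<in> space M. X i \<omega> \<le> x}"
    and mixing: "decseq (\<lambda>n. mixing_phi M X n)" "(\<lambda>n. mixing_phi M X n) \<longlonglongrightarrow> 0"
    and summ: "summable (\<lambda>n. sqrt (mixing_phi M X (Suc n)))"
    and p: "0 < p" "p < 1"
    and N: "open N" "Inf {x. F x \<ge> p} \<in> N"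
    and dens: "\<And>x. x \<in> N \<Longrightarrow> (F has_real_derivative f x) (at x)"
    and fpos: "\<And>x. x \<in> N \<Longrightarrow> f x > 0"
    and fcont: "continuous_on N f"
    and fbdd: "bdd_above (f ` N)"
    and deriv: "\<exists>U f' B. open U \<and> Inf {x. F x \<ge> p} \<in> U \<and>
                  (\<forall>x\<in>U. (f has_real_derivative f' x) (at x) \<and> \<bar>f' x\<bar> \<le> B)"
  shows "AE \<omega> in M.
     (\<lambda>n. Inf {x. emp_df X n \<omega> x \<ge> p}
          - (Inf {x. F x \<ge> p} - (emp_df X n \<omega> (Inf {x. F x \<ge> p}) - p) / f (Inf {x. F x \<ge> p})))
     \<in> O(\<lambda>n. sqrt (ln (real n)) / sqrt (real n))"
proof -
  have "0 \<le> mixing_phi M X n" for n using decseq_ge[OF mixing] .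
  then interpret phi_mixing_marginal M X F
    using assms(1) rv marg mixing(1) summable_of_summable_sqrt[OF _ summ]
    by (simp add: phi_mixing_marginal_def phi_mixing_def phi_mixing_axioms_def phi_mixing_marginal_axioms_def)
  define \<xi> where "\<xi> = Inf {x. p \<le> F x}"
  interpret D: real_distribution "distr M borel (X 1)" using rv[of 1] by simp
  have F_cdf: "F = cdf (distr M borel (X 1))"
    using marg[of 1] rv[of 1] by (intro ext) (simp add: cdf_def measure_distr vimage_def Int_def conj_commute)
  have der: "(F has_real_derivative f \<xi>) (at \<xi>)" using dens N(2) by (simp add: \<xi>_def)
  have F_\<xi>: "F \<xi> = p"
    using D.cdf_at_quantile[OF p] DERIV_isCont[OF der] unfolding F_cdf \<xi>_def by simp
  have f_\<xi>: "0 < f \<xi>" using fpos N(2) by (simp add: \<xi>_def)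
  show ?thesis
    unfolding \<xi>_def[symmetric] log_rate_def[abs_def, symmetric]
    using f_\<xi> F_\<xi> eventually_linear_bounds_of_DERIV[OF der, of "f \<xi> / 2"]
    by (intro AE_emp_quantile_linearization_bigo[where m = "f \<xi> / 2"]) auto
qed

end
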